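(* Let $r>0$ and $\sigma>0$, set $k=\frac{2r}{\sigma^2}$, and let $\widetilde{\widetilde{C}}_0:\mathbb{R}\to\mathbb{R}$ be $$\widetilde{\widetilde{C}}_0(x)=\max\left\{e^{\frac{(k+1)x}{2}}-e^{\frac{(k-1)x}{2}},\,0\right\}.$$ Fix $S_0\ge 0$, a positive integer $N_0$, and $\epsilon\in\{-1,1\}$. For $\lambda>0$ define the function $$\mathcal{F}\left(\widetilde{\widetilde{C}}_0,\lambda,N_0\right)(x)=\widetilde{\widetilde{C}}_0(x)+\epsilon\sum_{j=1}^{N_0}\lambda^{-j}\,\widetilde{\widetilde{C}}_0\left(\lambda^{-j}x\right).$$ Then $$\left\|\mathcal{F}\left(\widetilde{\widetilde{C}}_0,\lambda,N_0\right)-\widetilde{\widetilde{C}}_0\right\|^2_{L^2([0,S_0])}\longrightarrow 0\quad\text{as }\lambda\to+\infty,$$ i.e. for every $\varepsilon>0$ there exists $\lambda_0>0$ such that for all $\lambda\ge\lambda_0$ this squared norm is at most $\varepsilon$.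
   Context: $\widetilde{\widetilde{C}}_0$ is the initial datum obtained from the Black–Scholes call payoff after the standard change of variables $x=\ln(S/E)$ transforming the Black–Scholes equation into the heat equation; $r$ is the risk-free rate and $\sigma$ the volatility. $L^2([0,S_0])$ is the usual Lebesgue space on the interval $[0,S_0]$. *)

theory Defs
  imports "HOL-Analysis.Analysis"
begin

definition Ctt0 :: "real \<Rightarrow> real \<Rightarrow> real \<Rightarrow> real" where
  "Ctt0 r \<sigma> x = (let k = 2 * r / \<sigma>^2 in
      max (exp ((k + 1) * x / 2) - exp ((k - 1) * x / 2)) 0)"

definition FF :: "(real \<Rightarrow> real) \<Rightarrow> real \<Rightarrow> nat \<Rightarrow> real \<Rightarrow> real \<Rightarrow> real" where
  "FF C lam N0 \<epsilon> x = C x + \<epsilon> * (\<Sum>j=1..N0. (lam powi (- int j)) * C ((lam powi (- int j)) * x))"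

definition L2_norm_sq_on :: "real \<Rightarrow> (real \<Rightarrow> real) \<Rightarrow> real" where
  "L2_norm_sq_on S0 f = (LINT x:{0..S0}|lborel. (f x)^2)"

end

theory Submission imports Defs begin

text \<open>On \<open>[0,S0]\<close> the datum is bounded by some \<open>M\<close>, and the dilations \<open>\<lambda>\<^sup>-\<^sup>j x\<close> stay in
  \<open>[0,S0]\<close> for \<open>\<lambda> \<ge> 1\<close>. Hence every perturbation term \<open>\<lambda>\<^sup>-\<^sup>j C(\<lambda>\<^sup>-\<^sup>j x)\<close> is at most \<open>M/\<lambda>\<close>,
  the difference \<open>\<F> - C\<close> is uniformly \<open>O(N\<^sub>0 M/\<lambda>)\<close> there, and its squared \<open>L\<^sup>2\<close> norm is
  \<open>O(S0 (N\<^sub>0 M)\<^sup>2/\<lambda>\<^sup>2)\<close>.\<close>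

lemma L2_norm_sq_on_le:
  fixes f :: "real \<Rightarrow> real"
  assumes "S0 \<ge> 0" and bound: "\<And>x. x \<in> {0..S0} \<Longrightarrow> (f x)^2 \<le> B"
  shows "L2_norm_sq_on S0 f \<le> S0 * B"
proof -
  have "B \<ge> 0" using bound[of 0] assms(1) by (smt (verit) atLeastAtMost_iff zero_le_power2)
  have const_integrable: "set_integrable lborel {0..S0} (\<lambda>_. B)"
    unfolding set_integrable_def
    by (intro integrable_scaleR_left integrable_real_indicator) (auto simp: emeasure_lborel_Icc_eq)
  have const_integral: "(LINT x:{0..S0}|lborel. B) = S0 * B"
    using assms(1) by (simp add: set_lebesgue_integral_def)
  show ?thesis
  proof (cases "set_integrable lborel {0..S0} (\<lambda>x. (f x)^2)")
    case True
    then have "(LINT x:{0..S0}|lborel. (f x)^2) \<le> (LINT x:{0..S0}|lborel. B)"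
      using const_integrable bound by (intro set_integral_mono) auto
    then show ?thesis using const_integral by (simp add: L2_norm_sq_on_def)
  next
    case False
    \<comment> \<open>the Bochner integral of a non-integrable function is \<open>0\<close>\<close>
    then have "(LINT x:{0..S0}|lborel. (f x)^2) = 0"
      unfolding set_lebesgue_integral_def set_integrable_def by (simp add: not_integrable_integral_eq)
    then show ?thesis using \<open>B \<ge> 0\<close> assms(1) by (simp add: L2_norm_sq_on_def)
  qed
qed

lemma Ctt0_nonneg: "0 \<le> Ctt0 r \<sigma> y"
  by (simp add: Ctt0_def Let_def)

lemma Ctt0_le:
  assumes "r \<ge> 0" and "y \<le> S0"
  shows "Ctt0 r \<sigma> y \<le> exp ((2 * r / \<sigma>^2 + 1) * S0 / 2)"
proof -
  have "2 * r / \<sigma>^2 + 1 > 0" using assms(1) by (simp add: add_nonneg_pos)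
  then have "exp ((2 * r / \<sigma>^2 + 1) * y / 2) \<le> exp ((2 * r / \<sigma>^2 + 1) * S0 / 2)"
    using assms(2) by (simp add: divide_right_mono mult_left_mono)
  moreover have "exp ((2 * r / \<sigma>^2 - 1) * y / 2) > 0" by simp
  ultimately have "exp ((2 * r / \<sigma>^2 + 1) * y / 2) - exp ((2 * r / \<sigma>^2 - 1) * y / 2)
      \<le> exp ((2 * r / \<sigma>^2 + 1) * S0 / 2)"
    by linarith
  then show ?thesis by (simp add: Ctt0_def Let_def)
qed

lemma powi_neg_le_inverse:
  fixes lam :: real
  assumes "lam \<ge> 1" and "j \<ge> 1"
  shows "lam powi (- int j) \<le> 1 / lam"
proof -
  have "lam \<le> lam ^ j" using assms by (metis power_increasing power_one_right)
  then show ?thesis using assms(1) by (simp add: power_int_minus divide_simps)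
qed

lemma dilation_term_bound:
  fixes C :: "real \<Rightarrow> real"
  assumes bound: "\<And>y. y \<in> {0..S0} \<Longrightarrow> \<bar>C y\<bar> \<le> M"
    and "lam \<ge> 1" and "j \<ge> 1" and x: "x \<in> {0..S0}"
  shows "\<bar>lam powi (- int j) * C (lam powi (- int j) * x)\<bar> \<le> M / lam"
proof -
  define t where "t = lam powi (- int j)"
  have "0 < t" using assms(2) by (simp add: t_def)
  have "t \<le> 1 / lam" using powi_neg_le_inverse[OF assms(2,3)] by (simp add: t_def)
  also have "\<dots> \<le> 1" using assms(2) by simp
  finally have "t * x \<in> {0..S0}"
    using x \<open>0 < t\<close> mult_left_le_one_le[of x t] by auto
  then have "\<bar>C (t * x)\<bar> \<le> M" by (rule bound)
  then have "t * \<bar>C (t * x)\<bar> \<le> (1 / lam) * M"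
    using \<open>0 < t\<close> \<open>t \<le> 1 / lam\<close> assms(2) by (intro mult_mono) auto
  then show ?thesis using \<open>0 < t\<close> by (simp add: t_def abs_mult)
qed

lemma FF_diff_bound:
  fixes C :: "real \<Rightarrow> real"
  assumes bound: "\<And>y. y \<in> {0..S0} \<Longrightarrow> \<bar>C y\<bar> \<le> M"
    and "lam \<ge> 1" and "\<bar>\<epsilon>\<bar> \<le> 1" and x: "x \<in> {0..S0}"
  shows "\<bar>FF C lam N0 \<epsilon> x - C x\<bar> \<le> real N0 * M / lam"
proof -
  let ?s = "\<Sum>j=1..N0. lam powi (- int j) * C (lam powi (- int j) * x)"
  have "\<bar>FF C lam N0 \<epsilon> x - C x\<bar> = \<bar>\<epsilon>\<bar> * \<bar>?s\<bar>"
    by (simp add: FF_def abs_mult)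
  also have "\<dots> \<le> \<bar>?s\<bar>" using assms(3) by (simp add: mult_left_le_one_le)
  also have "\<dots> \<le> (\<Sum>j=1..N0. \<bar>lam powi (- int j) * C (lam powi (- int j) * x)\<bar>)"
    by (rule sum_abs)
  also have "\<dots> \<le> (\<Sum>j=1..N0. M / lam)"
    using dilation_term_bound[OF bound assms(2) _ x] by (intro sum_mono) auto
  finally show ?thesis by simp
qed

lemma L2_norm_sq_FF_diff_le:
  fixes C :: "real \<Rightarrow> real"
  assumes "S0 \<ge> 0" and bound: "\<And>y. y \<in> {0..S0} \<Longrightarrow> \<bar>C y\<bar> \<le> M"
    and "lam \<ge> 1" and "\<bar>\<epsilon>\<bar> \<le> 1"
  shows "L2_norm_sq_on S0 (\<lambda>x. FF C lam N0 \<epsilon> x - C x) \<le> S0 * (real N0 * M / lam)^2"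
proof (rule L2_norm_sq_on_le[OF assms(1)])
  fix x assume "x \<in> {0..S0}"
  then have "\<bar>FF C lam N0 \<epsilon> x - C x\<bar> \<le> real N0 * M / lam"
    using FF_diff_bound[of S0 C M lam \<epsilon> x N0] bound assms(3,4) by blast
  then show "(FF C lam N0 \<epsilon> x - C x)^2 \<le> (real N0 * M / lam)^2"
    by (meson abs_ge_self abs_le_square_iff order_trans)
qed

theorem proposition1:
  fixes r \<sigma> S0 \<epsilon> :: real and N0 :: nat
  assumes "r > 0" and "\<sigma> > 0" and "S0 \<ge> 0" and "N0 \<ge> 1"
    and "\<epsilon> \<in> {-1, 1}"
  shows "\<forall>e>0. \<exists>lam0>0. \<forall>lam\<ge>lam0.
     L2_norm_sq_on S0 (\<lambda>x. FF (Ctt0 r \<sigma>) lam N0 \<epsilon> x - Ctt0 r \<sigma> x) \<le> e"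
proof (intro allI impI)
  fix e :: real assume "e > 0"
  define M where "M = exp ((2 * r / \<sigma>^2 + 1) * S0 / 2)"
  define A where "A = S0 * (real N0 * M)^2"
  have bound: "\<bar>Ctt0 r \<sigma> y\<bar> \<le> M" if "y \<in> {0..S0}" for y
    using Ctt0_nonneg[of r \<sigma> y] Ctt0_le[of r y S0 \<sigma>] assms(1) that by (simp add: M_def)
  have "\<bar>\<epsilon>\<bar> \<le> 1" using assms(5) by auto
  have "L2_norm_sq_on S0 (\<lambda>x. FF (Ctt0 r \<sigma>) lam N0 \<epsilon> x - Ctt0 r \<sigma> x) \<le> e"
    if lam: "max 1 (A / e) \<le> lam" for lam
  proof -
    have "lam \<ge> 1" "A \<le> e * lam" using lam \<open>e > 0\<close> by (auto simp: pos_divide_le_eq mult.commute)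
    have "L2_norm_sq_on S0 (\<lambda>x. FF (Ctt0 r \<sigma>) lam N0 \<epsilon> x - Ctt0 r \<sigma> x) \<le> A / lam^2"
      using L2_norm_sq_FF_diff_le[OF assms(3) bound \<open>lam \<ge> 1\<close> \<open>\<bar>\<epsilon>\<bar> \<le> 1\<close>]
      by (simp add: A_def power_divide)
    also have "\<dots> \<le> A / lam"
      using \<open>lam \<ge> 1\<close> assms(3) by (intro divide_left_mono) (auto simp: A_def power2_eq_square)
    also have "\<dots> \<le> e" using \<open>A \<le> e * lam\<close> \<open>lam \<ge> 1\<close> by (simp add: divide_simps mult.commute)
    finally show ?thesis .
  qed
  then show "\<exists>lam0>0. \<forall>lam\<ge>lam0.
     L2_norm_sq_on S0 (\<lambda>x. FF (Ctt0 r \<sigma>) lam N0 \<epsilon> x - Ctt0 r \<sigma> x) \<le> e"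
    by (intro exI[of _ "max 1 (A / e)"]) auto
qed

end
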